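(* (5) $\lambda(L_1\sqcup C_2)$ is isomorphic to $L_1\sqcup L_1\sqcup C_2$. (6) $\lambda(L_2\times C_2)$ is isomorphic to $\big(L_1\sqcup(L_2\times L_2)\sqcup L_1\big)\times C_2$.
   Context: $\lambda(X)$ is the set of maximal linked upfamilies on $X$ (an upfamily is a family of nonempty subsets closed under supersets; linked means any two members intersect; maximal linked means not properly contained in another linked upfamily), with operation $\mathcal A*\mathcal B=\big\langle \bigcup_{a\in A} a*B_a : A\in\mathcal A,\ \{B_a\}_{a\in A}\subset\mathcal B\big\rangle$, where $\langle\mathcal C\rangle=\{A\subset X:\exists C\in\mathcal C,\ C\subset A\}$. $C_n=\{z\in\mathbb C:z^n=1\}$; $L_n=\{0,\dots,n-1\}$ with operation $\min$. For semigroups $(X,* )$, $(Y,\star)$, the disjoint ordered union $X\sqcup Y$ is the disjoint union with operation $x\circ y=x*y$ for $x,y\in X$; $x\circ y=x$ if $x\in X,y\in Y$; $x\circ y=y$ if $x\in Y,y\in X$; $x\circ y=x\star y$ for $x,y\in Y$ (this operation is associative: $(X\sqcup Y)\sqcup Z=X\sqcup(Y\sqcup Z)$). *)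

theory Defs
  imports Complex_Main
begin

definition upfamily :: "'a set \<Rightarrow> 'a set set \<Rightarrow> bool" where
  "upfamily X F \<longleftrightarrow> F \<subseteq> Pow X \<and> {} \<notin> F \<and>
     (\<forall>A\<in>F. \<forall>B. A \<subseteq> B \<and> B \<subseteq> X \<longrightarrow> B \<in> F)"

definition linked :: "'a set set \<Rightarrow> bool" where
  "linked F \<longleftrightarrow> (\<forall>A\<in>F. \<forall>B\<in>F. A \<inter> B \<noteq> {})"

definition maximal_linked :: "'a set \<Rightarrow> 'a set set \<Rightarrow> bool" where
  "maximal_linked X F \<longleftrightarrow> upfamily X F \<and> linked F \<and>
     (\<forall>G. upfamily X G \<and> linked G \<and> F \<subseteq> G \<longrightarrow> G = F)"

definition lam :: "'a set \<Rightarrow> 'a set set set" where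
  "lam X = {F. maximal_linked X F}"

definition lam_op :: "'a set \<Rightarrow> ('a \<Rightarrow> 'a \<Rightarrow> 'a) \<Rightarrow> 'a set set \<Rightarrow> 'a set set \<Rightarrow> 'a set set" where
  "lam_op X m \<A> \<B> = {S. S \<subseteq> X \<and> (\<exists>A\<in>\<A>. \<exists>Bf. (\<forall>a\<in>A. Bf a \<in> \<B>) \<and>
       (\<Union>a\<in>A. (\<lambda>b. m a b) ` Bf a) \<subseteq> S)}"

definition sg_iso :: "'a set \<Rightarrow> ('a \<Rightarrow> 'a \<Rightarrow> 'a) \<Rightarrow> 'b set \<Rightarrow> ('b \<Rightarrow> 'b \<Rightarrow> 'b) \<Rightarrow> bool" where
  "sg_iso X m Y n \<longleftrightarrow> (\<exists>f. bij_betw f X Y \<and> (\<forall>x\<in>X. \<forall>y\<in>X. f (m x y) = n (f x) (f y)))"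

definition dou :: "'a set \<Rightarrow> 'b set \<Rightarrow> ('a + 'b) set" where
  "dou X Y = X <+> Y"

fun dou_op :: "('a \<Rightarrow> 'a \<Rightarrow> 'a) \<Rightarrow> ('b \<Rightarrow> 'b \<Rightarrow> 'b) \<Rightarrow> 'a + 'b \<Rightarrow> 'a + 'b \<Rightarrow> 'a + 'b" where
  "dou_op m n (Inl x) (Inl y) = Inl (m x y)"
| "dou_op m n (Inl x) (Inr y) = Inl x"
| "dou_op m n (Inr x) (Inl y) = Inl y"
| "dou_op m n (Inr x) (Inr y) = Inr (n x y)"

definition prod_op :: "('a \<Rightarrow> 'a \<Rightarrow> 'a) \<Rightarrow> ('b \<Rightarrow> 'b \<Rightarrow> 'b) \<Rightarrow> 'a \<times> 'b \<Rightarrow> 'a \<times> 'b \<Rightarrow> 'a \<times> 'b" where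
  "prod_op m n p q = (m (fst p) (fst q), n (snd p) (snd q))"

text \<open>L_n = {0,...,n-1} with min; C_n = n-th roots of unity with multiplication.\<close>
definition Lset :: "nat \<Rightarrow> nat set" where
  "Lset n = {0..<n}"

definition Cset :: "nat \<Rightarrow> complex set" where
  "Cset n = {z. z ^ n = 1}"

end

theory Submission
  imports Defs
begin

(* A maximal linked family on a finite set is described by a finite family of generators:
   if Gs is linked and "decisive" (every subset of X contains a member of Gs or is disjoint
   from one), then its up-closure in X is maximal linked, and every maximal linked family
   containing Gs equals that up-closure.  The product lam_op of two such up-closures is again
   an up-closure as soon as every generator of the intended result contains a set of the form
   (union over a in A of a * B_a) with A, B_a generators.  In a maximal linked family F every
   nonempty S with S not in F has its complement X - S in F; hence F contains a singleton or
   all co-singletons X - {x}, which is what drives the classification of all maximal linked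
   families. *)

definition up_closure :: "'a set \<Rightarrow> 'a set set \<Rightarrow> 'a set set" where
  "up_closure X Gs = {S. S \<subseteq> X \<and> (\<exists>G\<in>Gs. G \<subseteq> S)}"

text \<open>Every subset of X contains a generator or misses one: this is what forces maximality.\<close>
definition decisive :: "'a set \<Rightarrow> 'a set set \<Rightarrow> bool" where
  "decisive X Gs \<longleftrightarrow> (\<forall>S\<in>Pow X. (\<exists>G\<in>Gs. G \<subseteq> S) \<or> (\<exists>G\<in>Gs. G \<inter> S = {}))"

definition products_generated ::
    "('a \<Rightarrow> 'a \<Rightarrow> 'a) \<Rightarrow> 'a set set \<Rightarrow> 'a set set \<Rightarrow> 'a set set \<Rightarrow> bool" where
  "products_generated m As Bs Gs \<longleftrightarrow>
     (\<forall>G\<in>Gs. \<exists>A\<in>As. \<forall>a\<in>A. \<exists>B\<in>Bs. (\<lambda>b. m a b) ` B \<subseteq> G)"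

text \<open>The sets X - {x}; a maximal linked family without a singleton contains all of them.\<close>
definition co_singletons :: "'a set \<Rightarrow> 'a set set" where
  "co_singletons X = (\<lambda>x. X - {x}) ` X"

lemma up_closure_iff: "S \<in> up_closure X Gs \<longleftrightarrow> S \<subseteq> X \<and> (\<exists>G\<in>Gs. G \<subseteq> S)"
  by (simp add: up_closure_def)

lemma maximal_linkedD:
  assumes "maximal_linked X F"
  shows "\<And>S. S \<in> F \<Longrightarrow> S \<subseteq> X"
    and "\<And>S T. S \<in> F \<Longrightarrow> S \<subseteq> T \<Longrightarrow> T \<subseteq> X \<Longrightarrow> T \<in> F"
    and "\<And>S T. S \<in> F \<Longrightarrow> T \<in> F \<Longrightarrow> S \<inter> T \<noteq> {}"
    and "{} \<notin> F"
    and "\<And>G. upfamily X G \<Longrightarrow> linked G \<Longrightarrow> F \<subseteq> G \<Longrightarrow> G = F"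
    and "upfamily X F" "linked F"
  using assms unfolding maximal_linked_def upfamily_def linked_def by blast+

text \<open>A linked upfamily containing a decisive family lies inside its up-closure: a set S
  containing no generator misses some generator H, contradicting linkedness.\<close>
lemma linked_upfamily_subset_up_closure:
  assumes "upfamily X G" "linked G" "Gs \<subseteq> G" "decisive X Gs"
  shows "G \<subseteq> up_closure X Gs"
proof
  fix S assume S: "S \<in> G"
  hence SX: "S \<subseteq> X" using assms(1) unfolding upfamily_def by blast
  show "S \<in> up_closure X Gs"
  proof (rule ccontr)
    assume "S \<notin> up_closure X Gs"
    hence "\<not> (\<exists>H\<in>Gs. H \<subseteq> S)" using SX by (simp add: up_closure_iff)
    then obtain H where "H \<in> Gs" "H \<inter> S = {}" using assms(4) SX unfolding decisive_def by blast
    thus False using assms(2,3) S unfolding linked_def by blast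
  qed
qed

lemma maximal_linked_up_closure:
  assumes "Gs \<subseteq> Pow X" "linked Gs" "decisive X Gs"
  shows "maximal_linked X (up_closure X Gs)"
proof -
  have no_empty: "{} \<notin> up_closure X Gs"
    using assms(2) unfolding up_closure_def linked_def by blast
  have up: "upfamily X (up_closure X Gs)"
    unfolding upfamily_def
  proof (intro conjI ballI allI impI no_empty)
    show "up_closure X Gs \<subseteq> Pow X" unfolding up_closure_def by blast
    fix S T assume "S \<in> up_closure X Gs" "S \<subseteq> T \<and> T \<subseteq> X"
    thus "T \<in> up_closure X Gs" unfolding up_closure_iff by (meson order_trans)
  qed
  have lk: "linked (up_closure X Gs)"
    unfolding linked_def
  proof (intro ballI)
    fix S T assume "S \<in> up_closure X Gs" "T \<in> up_closure X Gs"
    then obtain G H where "G \<in> Gs" "H \<in> Gs" "G \<subseteq> S" "H \<subseteq> T"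
      unfolding up_closure_iff by blast
    moreover have "G \<inter> H \<noteq> {}" using assms(2) calculation(1,2) unfolding linked_def by blast
    ultimately show "S \<inter> T \<noteq> {}" by blast
  qed
  have gens: "Gs \<subseteq> up_closure X Gs"
    using assms(1) unfolding up_closure_def by blast
  show ?thesis
    unfolding maximal_linked_def
  proof (intro conjI up lk allI impI)
    fix G assume G: "upfamily X G \<and> linked G \<and> up_closure X Gs \<subseteq> G"
    hence "G \<subseteq> up_closure X Gs"
      using linked_upfamily_subset_up_closure[OF _ _ _ assms(3)] gens by blast
    thus "G = up_closure X Gs" using G by blast
  qed
qed

lemma maximal_linked_eq_up_closure:
  assumes F: "maximal_linked X F" and "Gs \<subseteq> F" "decisive X Gs"
  shows "F = up_closure X Gs"
proof
  show "F \<subseteq> up_closure X Gs"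
    using linked_upfamily_subset_up_closure[OF maximal_linkedD(6,7)[OF F] assms(2,3)] .
  show "up_closure X Gs \<subseteq> F"
  proof
    fix S assume "S \<in> up_closure X Gs"
    then obtain G where "G \<in> Gs" "G \<subseteq> S" "S \<subseteq> X" unfolding up_closure_iff by blast
    thus "S \<in> F" using maximal_linkedD(2)[OF F] assms(2) by blast
  qed
qed

text \<open>Dichotomy: a nonempty S outside a maximal linked family F meets every member of F
  (otherwise X - S would contain a member), so if X - S were not in F as well, F together
  with the supersets of S would be a strictly larger linked upfamily.\<close>
lemma maximal_linked_complement:
  assumes F: "maximal_linked X F" and SX: "S \<subseteq> X" and "S \<noteq> {}" and "S \<notin> F"
  shows "X - S \<in> F"
proof (rule ccontr)
  assume "X - S \<notin> F"
  have meets: "B \<inter> S \<noteq> {}" if "B \<in> F" for B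
  proof
    assume "B \<inter> S = {}"
    hence "B \<subseteq> X - S" using maximal_linkedD(1)[OF F that] by blast
    thus False using maximal_linkedD(2)[OF F that] \<open>X - S \<notin> F\<close> by blast
  qed
  define G where "G = F \<union> {T. S \<subseteq> T \<and> T \<subseteq> X}"
  have "upfamily X G"
    unfolding upfamily_def
  proof (intro conjI ballI allI impI)
    show "G \<subseteq> Pow X" using maximal_linkedD(1)[OF F] unfolding G_def by blast
    show "{} \<notin> G" using maximal_linkedD(4)[OF F] \<open>S \<noteq> {}\<close> unfolding G_def by blast
    fix A B assume "A \<in> G" "A \<subseteq> B \<and> B \<subseteq> X"
    thus "B \<in> G" using maximal_linkedD(2)[OF F] unfolding G_def by blast
  qed
  moreover have "linked G"
    unfolding linked_def
  proof (intro ballI)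
    fix A B assume "A \<in> G" "B \<in> G"
    thus "A \<inter> B \<noteq> {}"
      using maximal_linkedD(3)[OF F, of A B] meets[of A] meets[of B] \<open>S \<noteq> {}\<close>
      unfolding G_def by blast
  qed
  ultimately have "G = F" using maximal_linkedD(5)[OF F] unfolding G_def by blast
  thus False using SX \<open>S \<notin> F\<close> unfolding G_def by blast
qed

lemma maximal_linked_singleton_or_co_singletons:
  assumes "maximal_linked X F"
  shows "(\<exists>x\<in>X. {x} \<in> F) \<or> co_singletons X \<subseteq> F"
  using maximal_linked_complement[OF assms] unfolding co_singletons_def by blast

lemma lam_op_upfamily:
  assumes A: "upfamily X \<A>" and B: "upfamily X \<B>"
  shows "upfamily X (lam_op X m \<A> \<B>)"
proof -
  have "{} \<notin> lam_op X m \<A> \<B>"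
  proof
    assume "{} \<in> lam_op X m \<A> \<B>"
    then obtain A Bf where A_mem: "A \<in> \<A>" and Bf: "\<forall>a\<in>A. Bf a \<in> \<B>"
      and empty: "(\<Union>a\<in>A. (\<lambda>b. m a b) ` Bf a) \<subseteq> {}"
      unfolding lam_op_def by blast
    have "{} \<notin> \<A>" "{} \<notin> \<B>" using A B unfolding upfamily_def by simp_all
    then obtain a b where a: "a \<in> A" and "b \<in> Bf a"
      using A_mem Bf by (metis all_not_in_conv)
    thus False using a empty by blast
  qed
  moreover have "lam_op X m \<A> \<B> \<subseteq> Pow X"
    unfolding lam_op_def by blast
  moreover have "\<forall>S\<in>lam_op X m \<A> \<B>. \<forall>T. S \<subseteq> T \<and> T \<subseteq> X \<longrightarrow> T \<in> lam_op X m \<A> \<B>"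
    unfolding lam_op_def by (simp, meson order_trans)
  ultimately show ?thesis
    unfolding upfamily_def by blast
qed

text \<open>Two product sets share the element a * b for a common a of the chosen A-sets and a
  common b of the chosen B-sets at a.\<close>
lemma lam_op_linked:
  assumes "linked \<A>" "linked \<B>"
  shows "linked (lam_op X m \<A> \<B>)"
  unfolding linked_def
proof (intro ballI)
  fix S T assume "S \<in> lam_op X m \<A> \<B>" "T \<in> lam_op X m \<A> \<B>"
  then obtain A1 Bf A2 Bg where A: "A1 \<in> \<A>" "A2 \<in> \<A>"
    and B: "\<forall>a\<in>A1. Bf a \<in> \<B>" "\<forall>a\<in>A2. Bg a \<in> \<B>"
    and sub: "(\<Union>a\<in>A1. (\<lambda>b. m a b) ` Bf a) \<subseteq> S" "(\<Union>a\<in>A2. (\<lambda>b. m a b) ` Bg a) \<subseteq> T"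
    unfolding lam_op_def by auto
  obtain a where a: "a \<in> A1" "a \<in> A2" using assms(1) A unfolding linked_def by blast
  obtain b where "b \<in> Bf a" "b \<in> Bg a" using assms(2) B a unfolding linked_def by blast
  hence "m a b \<in> S \<inter> T" using sub a by blast
  thus "S \<inter> T \<noteq> {}" by blast
qed

text \<open>Products of up-closures: the product contains the target generators, and being a
  linked upfamily it is squeezed onto the maximal linked target.\<close>
lemma lam_op_up_closure:
  assumes A: "maximal_linked X (up_closure X As)" and B: "maximal_linked X (up_closure X Bs)"
    and C: "maximal_linked X (up_closure X Gs)"
    and sub: "As \<subseteq> Pow X" "Bs \<subseteq> Pow X"
    and prod: "products_generated m As Bs Gs"
  shows "lam_op X m (up_closure X As) (up_closure X Bs) = up_closure X Gs"
proof -
  let ?P = "lam_op X m (up_closure X As) (up_closure X Bs)"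
  have "up_closure X Gs \<subseteq> ?P"
  proof
    fix S assume "S \<in> up_closure X Gs"
    then obtain G where G: "G \<in> Gs" "G \<subseteq> S" "S \<subseteq> X" unfolding up_closure_iff by blast
    then obtain A where A_mem: "A \<in> As" and "\<forall>a\<in>A. \<exists>B\<in>Bs. (\<lambda>b. m a b) ` B \<subseteq> G"
      using prod unfolding products_generated_def by blast
    then obtain Bf where Bf: "\<forall>a\<in>A. Bf a \<in> Bs \<and> (\<lambda>b. m a b) ` Bf a \<subseteq> G"
      by metis
    have "A \<in> up_closure X As" using A_mem sub(1) unfolding up_closure_iff by blast
    moreover have "\<forall>a\<in>A. Bf a \<in> up_closure X Bs" using Bf sub(2) unfolding up_closure_iff by blast
    moreover have "(\<Union>a\<in>A. (\<lambda>b. m a b) ` Bf a) \<subseteq> S" using Bf G(2) by blast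
    ultimately show "S \<in> ?P" using G(3) unfolding lam_op_def by blast
  qed
  moreover have "upfamily X ?P"
    using lam_op_upfamily[OF maximal_linkedD(6)[OF A] maximal_linkedD(6)[OF B]] .
  moreover have "linked ?P"
    using lam_op_linked[OF maximal_linkedD(7)[OF A] maximal_linkedD(7)[OF B]] .
  ultimately show ?thesis using maximal_linkedD(5)[OF C] by blast
qed

lemma sg_iso_by_bij_hom:
  assumes bij: "bij_betw g Y L"
    and hom: "\<forall>y1\<in>Y. \<forall>y2\<in>Y. n y1 y2 \<in> Y \<and> g (n y1 y2) = mop (g y1) (g y2)"
  shows "sg_iso L mop Y n"
  unfolding sg_iso_def
proof (intro exI conjI ballI)
  show "bij_betw (inv_into Y g) L Y" using bij by (rule bij_betw_inv_into)
  fix x y assume "x \<in> L" "y \<in> L"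
  then obtain y1 y2 where y: "y1 \<in> Y" "y2 \<in> Y" "x = g y1" "y = g y2"
    using bij unfolding bij_betw_def by blast
  have inj: "inj_on g Y" using bij unfolding bij_betw_def by simp
  have "n y1 y2 \<in> Y" "mop x y = g (n y1 y2)" using hom y by simp_all
  thus "inv_into Y g (mop x y) = n (inv_into Y g x) (inv_into Y g y)"
    using inj y by simp
qed

lemma sg_iso_lam_by_generators:
  assumes sub: "\<forall>y\<in>Y. gens y \<subseteq> Pow X"
    and lk: "\<forall>y\<in>Y. linked (gens y)"
    and dec: "\<forall>y\<in>Y. decisive X (gens y)"
    and prod: "\<forall>y1\<in>Y. \<forall>y2\<in>Y. n y1 y2 \<in> Y \<and> products_generated m (gens y1) (gens y2) (gens (n y1 y2))"
    and separating: "\<forall>y1\<in>Y. \<forall>y2\<in>Y. gens y1 \<subseteq> up_closure X (gens y2) \<longrightarrow> y1 = y2"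
    and classify: "\<And>F. maximal_linked X F \<Longrightarrow> \<exists>y\<in>Y. gens y \<subseteq> F"
  shows "sg_iso (lam X) (lam_op X m) Y n"
proof (rule sg_iso_by_bij_hom)
  let ?g = "\<lambda>y. up_closure X (gens y)"
  have ml: "maximal_linked X (?g y)" if "y \<in> Y" for y
    using that sub lk dec by (intro maximal_linked_up_closure) auto
  have "inj_on ?g Y"
  proof (rule inj_onI)
    fix y1 y2 assume "y1 \<in> Y" "y2 \<in> Y" "?g y1 = ?g y2"
    moreover have "gens y1 \<subseteq> ?g y1" using sub \<open>y1 \<in> Y\<close> unfolding up_closure_def by blast
    ultimately have "gens y1 \<subseteq> up_closure X (gens y2)" by simp
    thus "y1 = y2" using separating \<open>y1 \<in> Y\<close> \<open>y2 \<in> Y\<close> by blast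
  qed
  moreover have "?g ` Y = lam X"
  proof
    show "?g ` Y \<subseteq> lam X" using ml unfolding lam_def by auto
    show "lam X \<subseteq> ?g ` Y"
    proof
      fix F assume "F \<in> lam X"
      hence F: "maximal_linked X F" unfolding lam_def by simp
      then obtain y where y: "y \<in> Y" "gens y \<subseteq> F" using classify by blast
      hence "F = ?g y" using maximal_linked_eq_up_closure[OF F y(2)] dec by blast
      thus "F \<in> ?g ` Y" using \<open>y \<in> Y\<close> by blast
    qed
  qed
  ultimately show "bij_betw ?g Y (lam X)" unfolding bij_betw_def by blast
  show "\<forall>y1\<in>Y. \<forall>y2\<in>Y. n y1 y2 \<in> Y \<and> ?g (n y1 y2) = lam_op X m (?g y1) (?g y2)"
  proof (intro ballI conjI)
    fix y1 y2 assume y: "y1 \<in> Y" "y2 \<in> Y"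
    show ny: "n y1 y2 \<in> Y" using prod y by blast
    show "?g (n y1 y2) = lam_op X m (?g y1) (?g y2)"
      using lam_op_up_closure[OF ml[OF y(1)] ml[OF y(2)] ml[OF ny]] sub prod y by simp
  qed
qed

lemma Cset_2: "Cset 2 = {1, -1}"
  unfolding Cset_def by (auto simp: power2_eq_1_iff)

lemma Lset_1: "Lset 1 = {0}"
  unfolding Lset_def by auto

lemma Lset_2: "Lset 2 = {0, 1}"
  unfolding Lset_def by auto

text \<open>The first instance: X = L1 + C2 has three points, and lambda(X) consists of the two
  principal families at the points of C2, the principal family at the point of L1, and the
  family generated by the three two-point sets (the co-singletons).\<close>

definition X5 :: "(nat + complex) set" where
  "X5 = {Inl 0, Inr 1, Inr (-1)}"

definition Y5 :: "(nat + (nat + complex)) set" where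
  "Y5 = {Inl 0, Inr (Inl 0), Inr (Inr 1), Inr (Inr (-1))}"

lemma X5_eq: "dou (Lset 1) (Cset 2) = X5"
  unfolding X5_def dou_def Lset_1 Cset_2 by auto

lemma Y5_eq: "dou (Lset 1) X5 = Y5"
  unfolding Y5_def X5_def dou_def Lset_1 by auto

lemma co_singletons_X5: "co_singletons X5 = {{Inr 1, Inr (-1)}, {Inl 0, Inr (-1)}, {Inl 0, Inr 1}}"
  unfolding co_singletons_def X5_def by auto

fun gens5 :: "nat + (nat + complex) \<Rightarrow> (nat + complex) set set" where
  "gens5 (Inl _) = {{Inl 0}}"
| "gens5 (Inr (Inl _)) = co_singletons X5"
| "gens5 (Inr (Inr c)) = {{Inr c}}"

lemma gens5_subset: "\<forall>y\<in>Y5. gens5 y \<subseteq> Pow X5"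
  unfolding Y5_def by (auto simp: co_singletons_def X5_def)

lemma gens5_linked: "\<forall>y\<in>Y5. linked (gens5 y)"
  unfolding Y5_def linked_def by (simp add: co_singletons_X5)

lemma gens5_decisive: "\<forall>y\<in>Y5. decisive X5 (gens5 y)"
  unfolding Y5_def decisive_def
  by (simp add: co_singletons_X5, simp add: X5_def Pow_insert ex_disj_distrib)

lemma gens5_products: "\<forall>y1\<in>Y5. \<forall>y2\<in>Y5. dou_op min (dou_op min (*)) y1 y2 \<in> Y5 \<and>
   products_generated (dou_op min (*)) (gens5 y1) (gens5 y2) (gens5 (dou_op min (dou_op min (*)) y1 y2))"
  unfolding Y5_def products_generated_def by (simp add: co_singletons_X5)

lemma gens5_separating: "\<forall>y1\<in>Y5. \<forall>y2\<in>Y5. gens5 y1 \<subseteq> up_closure X5 (gens5 y2) \<longrightarrow> y1 = y2"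
  unfolding Y5_def up_closure_def by (simp add: co_singletons_X5)

lemma gens5_classify:
  assumes "maximal_linked X5 F"
  shows "\<exists>y\<in>Y5. gens5 y \<subseteq> F"
  using maximal_linked_singleton_or_co_singletons[OF assms] by (auto simp: Y5_def X5_def)

text \<open>Besides the four principal families,
  a maximal linked family contains all three-point sets and exactly one set from each of the
  three complementary pairs of two-point sets; all eight choices occur.  For the element
  (Inl (Inr (i, j)), c) the chosen two-point sets are the row {i} x C2, the column L2 x {c}
  and the "twisted diagonal" through (0, c (-1)^j); when i = j these form a star and the
  three-point set opposite its centre has to be added as a generator.\<close>

definition X6 :: "(nat \<times> complex) set" where
  "X6 = {(0, 1), (0, -1), (1, 1), (1, -1)}"

definition Y6 :: "(((nat + nat \<times> nat) + nat) \<times> complex) set" where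
  "Y6 = {(Inl (Inl 0), 1), (Inl (Inl 0), -1), (Inr 0, 1), (Inr 0, -1),
         (Inl (Inr (0, 0)), 1), (Inl (Inr (0, 1)), 1), (Inl (Inr (1, 0)), 1), (Inl (Inr (1, 1)), 1),
         (Inl (Inr (0, 0)), -1), (Inl (Inr (0, 1)), -1), (Inl (Inr (1, 0)), -1), (Inl (Inr (1, 1)), -1)}"

lemma X6_eq: "Lset 2 \<times> Cset 2 = X6"
  unfolding X6_def Lset_2 Cset_2 by auto

lemma Y6_eq: "dou (dou (Lset 1) (Lset 2 \<times> Lset 2)) (Lset 1) \<times> Cset 2 = Y6"
  unfolding Y6_def dou_def Lset_1 Lset_2 Cset_2 by auto

lemma co_singletons_X6: "co_singletons X6 =
   {{(0, -1), (1, 1), (1, -1)}, {(0, 1), (1, 1), (1, -1)}, {(0, 1), (0, -1), (1, -1)}, {(0, 1), (0, -1), (1, 1)}}"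
  unfolding co_singletons_def X6_def by auto

fun gens6 :: "((nat + nat \<times> nat) + nat) \<times> complex \<Rightarrow> (nat \<times> complex) set set" where
  "gens6 (Inl (Inl _), c) = {{(0, c)}}"
| "gens6 (Inr _, c) = {{(1, c)}}"
| "gens6 (Inl (Inr (i, j)), c) =
     {{(i, 1), (i, -1)}, {(0, c), (1, c)}, {(0, c * (-1) ^ j), (1, - c * (-1) ^ j)}} \<union>
     (if i = j then {X6 - {(i, c)}} else {})"

lemma gens6_subset: "\<forall>y\<in>Y6. gens6 y \<subseteq> Pow X6"
  unfolding Y6_def by (auto simp: X6_def)

lemma gens6_linked: "\<forall>y\<in>Y6. linked (gens6 y)"
  unfolding Y6_def linked_def by (simp add: X6_def insert_Diff_if)

lemma gens6_decisive: "\<forall>y\<in>Y6. decisive X6 (gens6 y)"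
  unfolding Y6_def decisive_def by (simp add: X6_def insert_Diff_if Pow_insert ex_disj_distrib)

lemma gens6_products: "\<forall>y1\<in>Y6. \<forall>y2\<in>Y6. prod_op (dou_op (dou_op min (prod_op min min)) min) (*) y1 y2 \<in> Y6 \<and>
   products_generated (prod_op min (*)) (gens6 y1) (gens6 y2)
     (gens6 (prod_op (dou_op (dou_op min (prod_op min min)) min) (*) y1 y2))"
  unfolding Y6_def products_generated_def by (simp add: X6_def insert_Diff_if prod_op_def)

lemma gens6_separating: "\<forall>y1\<in>Y6. \<forall>y2\<in>Y6. gens6 y1 \<subseteq> up_closure X6 (gens6 y2) \<longrightarrow> y1 = y2"
  unfolding Y6_def up_closure_def by (simp add: X6_def insert_Diff_if)

lemma gens6_classify:
  assumes F: "maximal_linked X6 F"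
  shows "\<exists>y\<in>Y6. gens6 y \<subseteq> F"
  using maximal_linked_singleton_or_co_singletons[OF F]
proof
  assume "\<exists>x\<in>X6. {x} \<in> F"
  thus ?thesis by (auto simp: Y6_def X6_def)
next
  assume "co_singletons X6 \<subseteq> F"
  hence three_point_sets: "{(0, -1), (1, 1), (1, -1)} \<in> F" "{(0, 1), (1, 1), (1, -1)} \<in> F"
      "{(0, 1), (0, -1), (1, -1)} \<in> F" "{(0, 1), (0, -1), (1, 1)} \<in> F"
    unfolding co_singletons_X6 by simp_all
  have pair: "S \<in> F \<or> T \<in> F" if "S \<subseteq> X6" "S \<noteq> {}" "X6 - S = T" for S T
    using maximal_linked_complement[OF F] that by blast
  have "{(0, 1), (0, -1)} \<in> F \<or> {(1, 1), (1, -1)} \<in> F"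
    "{(0, 1), (1, 1)} \<in> F \<or> {(0, -1), (1, -1)} \<in> F"
    "{(0, 1), (1, -1)} \<in> F \<or> {(0, -1), (1, 1)} \<in> F"
    by (rule pair; simp add: X6_def insert_Diff_if insert_commute)+
  thus ?thesis using three_point_sets by (simp add: Y6_def X6_def insert_Diff_if) blast
qed

lemma lambda_L1_C2:
  "sg_iso (lam (dou (Lset 1) (Cset 2))) (lam_op (dou (Lset 1) (Cset 2)) (dou_op min (*)))
     (dou (Lset 1) (dou (Lset 1) (Cset 2))) (dou_op min (dou_op min (*)))"
  unfolding X5_eq Y5_eq
  by (rule sg_iso_lam_by_generators[OF gens5_subset gens5_linked gens5_decisive gens5_products
        gens5_separating gens5_classify])

lemma lambda_L2_C2:
  "sg_iso (lam (Lset 2 \<times> Cset 2)) (lam_op (Lset 2 \<times> Cset 2) (prod_op min (*)))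
     (dou (dou (Lset 1) (Lset 2 \<times> Lset 2)) (Lset 1) \<times> Cset 2)
     (prod_op (dou_op (dou_op min (prod_op min min)) min) (*))"
  unfolding X6_eq Y6_eq
  by (rule sg_iso_lam_by_generators[OF gens6_subset gens6_linked gens6_decisive gens6_products
        gens6_separating gens6_classify])

theorem proposition4p1:
  shows "sg_iso (lam (dou (Lset 1) (Cset 2))) (lam_op (dou (Lset 1) (Cset 2)) (dou_op min (*)))
                (dou (Lset 1) (dou (Lset 1) (Cset 2))) (dou_op min (dou_op min (*))) \<and>
         sg_iso (lam (Lset 2 \<times> Cset 2)) (lam_op (Lset 2 \<times> Cset 2) (prod_op min (*)))
                (dou (dou (Lset 1) (Lset 2 \<times> Lset 2)) (Lset 1) \<times> Cset 2)
                (prod_op (dou_op (dou_op min (prod_op min min)) min) (*))"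
  using lambda_L1_C2 lambda_L2_C2 by blast

end
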